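(* Let $S$ be a semigroup and let $a_1,a_2,\dotsc$ be a sequence in $S$. If the set $\mathrm{FS}(a_1,a_2,\dotsc)$ is infinite, then it is a proper IP set; in particular, every superset of such a set is a proper IP set.
   Context: Semigroups are written additively but are not assumed commutative. For a sequence $a_1,a_2,\dotsc$ in a semigroup, $\mathrm{FS}(a_1,a_2,\dotsc):=\{a_{i_1}+\dotsb+a_{i_m} : m\ge 1,\ i_1<\dotsb<i_m\}$, and for a natural number $n$, $\mathrm{FS}(a_1,\dotsc,a_n):=\{a_{i_1}+\dotsb+a_{i_m} : m\ge1,\ i_1<\dotsb<i_m\le n\}$. A subset of a semigroup is a proper IP set if it contains $\mathrm{FS}(b_1,b_2,\dotsc)$ for some bijective (i.e. injective) sequence $b_1,b_2,\dotsc$ in the semigroup. *)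

theory Defs
  imports Main
begin

fun nsum :: "('a::semigroup_add) list \<Rightarrow> 'a" where
  "nsum [] = undefined"
| "nsum [x] = x"
| "nsum (x # y # xs) = x + nsum (y # xs)"

text \<open>FS(a_1,a_2,...): all sums a_{i1} + ... + a_{im} with m \<ge> 1, i1 < ... < im,
  i.e. sums over finite nonempty index sets F, added in increasing index order.\<close>
definition FS :: "(nat \<Rightarrow> 'a::semigroup_add) \<Rightarrow> 'a set" where
  "FS a = {nsum (map a (sorted_list_of_set F)) | F. finite F \<and> F \<noteq> {}}"

definition proper_IP_set :: "('a::semigroup_add) set \<Rightarrow> bool" where
  "proper_IP_set A \<longleftrightarrow> (\<exists>b :: nat \<Rightarrow> 'a. inj b \<and> FS b \<subseteq> A)"

end

theory Submission
  imports Defs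
begin

text \<open>Every sum in FS(a) is a sum of indices below m, a sum of indices from m on, or a sum
  of one of each; as there are only finitely many of the first kind, every tail
  FS(a_m, a_{m+1}, ...) is infinite if FS(a) is. Hence one can choose inductively finite blocks
  of indices F_0 < F_1 < ... such that the sum b_{k+1} of a over F_{k+1} avoids the finitely many
  sums over subsets of [0, max F_k], which contain b_0, ..., b_k; so b is injective. A finite
  sum of the b_k is the sum of a over a union of blocks, hence FS(b) \<subseteq> FS(a).\<close>

definition block_sum :: "(nat \<Rightarrow> 'a::semigroup_add) \<Rightarrow> nat set \<Rightarrow> 'a" where
  "block_sum a F = nsum (map a (sorted_list_of_set F))"

lemma FS_eq_image_block_sum: "FS a = block_sum a ` {F. finite F \<and> F \<noteq> {}}"
  unfolding FS_def block_sum_def by auto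

lemma nsum_Cons: "ys \<noteq> [] \<Longrightarrow> nsum (x # ys) = x + nsum ys"
  by (cases ys) auto

lemma nsum_append: "xs \<noteq> [] \<Longrightarrow> ys \<noteq> [] \<Longrightarrow> nsum (xs @ ys) = nsum xs + nsum ys"
proof (induction xs)
  case (Cons x xs)
  then show ?case by (cases "xs = []") (auto simp: nsum_Cons add.assoc)
qed simp

lemma sorted_list_of_set_Un_less:
  fixes A B :: "nat set"
  assumes "finite A" "finite B" "\<forall>i\<in>A. \<forall>j\<in>B. i < j"
  shows "sorted_list_of_set (A \<union> B) = sorted_list_of_set A @ sorted_list_of_set B"
  using assms by (intro sorted_distinct_set_unique) (auto simp: sorted_append less_imp_le)

lemma block_sum_Un_less:
  assumes "finite A" "finite B" "A \<noteq> {}" "B \<noteq> {}" "\<forall>i\<in>A. \<forall>j\<in>B. i < j"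
  shows "block_sum a (A \<union> B) = block_sum a A + block_sum a B"
  using assms by (simp add: block_sum_def sorted_list_of_set_Un_less nsum_append)

lemma infinite_FS_tail:
  assumes "infinite (FS a)"
  shows "infinite (block_sum a ` {F. finite F \<and> F \<noteq> {} \<and> F \<subseteq> {m..}})"
proof
  define P where "P = block_sum a ` Pow {..<m}"
  define T where "T = block_sum a ` {F. finite F \<and> F \<noteq> {} \<and> F \<subseteq> {m..}}"
  assume "finite T"
  have "FS a \<subseteq> P \<union> T \<union> case_prod (+) ` (P \<times> T)"
  proof
    fix x assume "x \<in> FS a"
    then obtain F where F: "finite F" "F \<noteq> {}" and x: "x = block_sum a F"
      by (auto simp: FS_eq_image_block_sum)
    define G where "G = F \<inter> {..<m}"
    define H where "H = F \<inter> {m..}"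
    have F_eq: "F = G \<union> H" and fin: "finite G" "finite H"
      using F(1) by (auto simp: G_def H_def)
    have less: "\<forall>i\<in>G. \<forall>j\<in>H. i < j"
      by (auto simp: G_def H_def)
    have "G \<noteq> {} \<Longrightarrow> block_sum a G \<in> P" "H \<noteq> {} \<Longrightarrow> block_sum a H \<in> T"
      using fin by (auto simp: P_def T_def G_def H_def)
    moreover have "G \<noteq> {} \<Longrightarrow> H \<noteq> {} \<Longrightarrow> x = block_sum a G + block_sum a H"
      using block_sum_Un_less[OF fin _ _ less] by (simp add: x F_eq)
    moreover have "G \<noteq> {} \<or> H \<noteq> {}"
      using F(2) F_eq by blast
    ultimately show "x \<in> P \<union> T \<union> case_prod (+) ` (P \<times> T)"
      by (cases "G = {}"; cases "H = {}") (auto simp: x F_eq)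
  qed
  moreover have "finite P"
    by (simp add: P_def)
  ultimately show False
    using assms \<open>finite T\<close> finite_subset by blast
qed

lemma exists_block_sum_above_avoiding:
  assumes "infinite (FS a)" "finite X"
  obtains F where "finite F" "F \<noteq> {}" "F \<subseteq> {m..}" "block_sum a F \<notin> X"
proof -
  have "\<not> block_sum a ` {F. finite F \<and> F \<noteq> {} \<and> F \<subseteq> {m..}} \<subseteq> X"
    using infinite_FS_tail[OF assms(1)] assms(2) finite_subset by blast
  then show ?thesis
    using that by blast
qed

lemma FS_block_sums_subset:
  assumes blocks: "\<And>k. finite (F k) \<and> F k \<noteq> {}"
    and increasing: "\<And>k l i j. k < l \<Longrightarrow> i \<in> F k \<Longrightarrow> j \<in> F l \<Longrightarrow> i < j"
  shows "FS (\<lambda>k. block_sum a (F k)) \<subseteq> FS a"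
proof -
  have union: "nsum (map (\<lambda>k. block_sum a (F k)) ks) = block_sum a (\<Union>k\<in>set ks. F k)"
    if "sorted_wrt (<) ks" "ks \<noteq> []" for ks
    using that
  proof (induction ks)
    case (Cons k ks)
    show ?case
    proof (cases "ks = []")
      case False
      have "\<forall>i\<in>F k. \<forall>j\<in>(\<Union>l\<in>set ks. F l). i < j"
        using Cons.prems(1) increasing by auto
      then have "block_sum a (F k \<union> (\<Union>l\<in>set ks. F l))
          = block_sum a (F k) + block_sum a (\<Union>l\<in>set ks. F l)"
        using blocks False by (intro block_sum_Un_less) auto
      then show ?thesis
        using Cons False by (simp add: nsum_Cons)
    qed simp
  qed simp
  show ?thesis
  proof
    fix x assume "x \<in> FS (\<lambda>k. block_sum a (F k))"
    then obtain H where H: "finite H" "H \<noteq> {}"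
      and x: "x = nsum (map (\<lambda>k. block_sum a (F k)) (sorted_list_of_set H))"
      unfolding FS_def by auto
    have "x = block_sum a (\<Union>k\<in>H. F k)"
      using union[of "sorted_list_of_set H"] H x by simp
    moreover have "finite (\<Union>k\<in>H. F k)" "(\<Union>k\<in>H. F k) \<noteq> {}"
      using H blocks by auto
    ultimately show "x \<in> FS a"
      by (auto simp: FS_eq_image_block_sum)
  qed
qed

lemma exists_increasing_blocks_distinct_sums:
  assumes "infinite (FS a)"
  obtains F where "\<And>k. finite (F k) \<and> F k \<noteq> {}"
    and "\<And>k. Max (F k) < Min (F (Suc k))"
    and "\<And>k. block_sum a (F (Suc k)) \<notin> block_sum a ` Pow {..Max (F k)}"
proof -
  let ?block = "\<lambda>G. finite G \<and> G \<noteq> {}"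
  let ?next = "\<lambda>G G'. Max G < Min G' \<and> block_sum a G' \<notin> block_sum a ` Pow {..Max G}"
  have next_block: "\<exists>G'. ?block G' \<and> ?next G G'" for G
  proof -
    have "finite (block_sum a ` Pow {..Max G})"
      by simp
    then obtain G' where G': "finite G'" "G' \<noteq> {}" "G' \<subseteq> {Suc (Max G)..}"
      "block_sum a G' \<notin> block_sum a ` Pow {..Max G}"
      by (rule exists_block_sum_above_avoiding[OF assms])
    have "Min G' \<in> {Suc (Max G)..}"
      using Min_in[OF G'(1,2)] G'(3) by blast
    then have "Max G < Min G'"
      by simp
    then show ?thesis
      using G' by blast
  qed
  have "\<exists>G. ?block G"
    by blast
  from dependent_nat_choice[of "\<lambda>_. ?block" "\<lambda>_. ?next", OF this next_block]
  obtain F where "\<forall>k. ?block (F k) \<and> ?next (F k) (F (Suc k))"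
    by blast
  then show ?thesis
    using that by blast
qed

lemma block_subset_atMost_Max_later:
  assumes blocks: "\<And>k. finite (F k) \<and> F k \<noteq> {}"
    and gap: "\<And>k. Max (F k) < Min (F (Suc k))"
    and "k \<le> l"
  shows "F k \<subseteq> {..Max (F l)}"
proof -
  have "strict_mono (\<lambda>k. Max (F k))"
    unfolding strict_mono_Suc_iff using gap blocks by (meson Max_ge Min_in less_le_trans)
  then have "Max (F k) \<le> Max (F l)"
    using strict_mono_less_eq \<open>k \<le> l\<close> by blast
  then show ?thesis
    using blocks by (auto intro: Max_ge order_trans)
qed

lemma blocks_increasing:
  assumes blocks: "\<And>k. finite (F k) \<and> F k \<noteq> {}"
    and gap: "\<And>k. Max (F k) < Min (F (Suc k))"
    and "k < l" "i \<in> F k" "j \<in> F l"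
  shows "i < j"
proof -
  obtain l' where l: "l = Suc l'" "k \<le> l'"
    using \<open>k < l\<close> by (cases l) auto
  have "i \<le> Max (F l')"
    using block_subset_atMost_Max_later[where F = F, OF blocks gap l(2)] \<open>i \<in> F k\<close> by blast
  also have "\<dots> < Min (F l)"
    using gap l(1) by simp
  also have "\<dots> \<le> j"
    using blocks \<open>j \<in> F l\<close> by simp
  finally show ?thesis .
qed

theorem lemma1p3:
  fixes a :: "nat \<Rightarrow> 'a::semigroup_add"
  assumes "infinite (FS a)"
  shows "proper_IP_set (FS a) \<and> (\<forall>B. FS a \<subseteq> B \<longrightarrow> proper_IP_set B)"
proof -
  obtain F where blocks: "\<And>k. finite (F k) \<and> F k \<noteq> {}"
    and gap: "\<And>k. Max (F k) < Min (F (Suc k))"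
    and new_sum: "\<And>k. block_sum a (F (Suc k)) \<notin> block_sum a ` Pow {..Max (F k)}"
    using exists_increasing_blocks_distinct_sums[OF assms] by blast
  have "block_sum a (F k) \<noteq> block_sum a (F l)" if "k < l" for k l
  proof -
    obtain l' where l: "l = Suc l'" "k \<le> l'"
      using \<open>k < l\<close> by (cases l) auto
    show ?thesis
      using block_subset_atMost_Max_later[where F = F, OF blocks gap l(2)] new_sum[of l'] l(1)
      by (metis PowI imageI)
  qed
  then have "inj (\<lambda>k. block_sum a (F k))"
    by (metis injI linorder_neq_iff)
  moreover have "FS (\<lambda>k. block_sum a (F k)) \<subseteq> FS a"
    using blocks blocks_increasing[where F = F, OF blocks gap] by (rule FS_block_sums_subset)
  ultimately show ?thesis
    unfolding proper_IP_set_def by blast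
qed

end
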